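(* For every composite number $a\in\mathbb N$, there exist at least two distinct integer bases $b,c\ge 2$ such that $a$ is antipalindromic both in base $b$ and in base $c$.
   Context: For an integer $b\ge 2$, every natural number $x$ has a unique base-$b$ expansion $x=a_\ell b^\ell+\dots+a_1b+a_0$ with $a_0,\dots,a_\ell\in\{0,1,\dots,b-1\}$ and $a_\ell\neq 0$. The number $x$ is antipalindromic in base $b$ if $a_j=b-1-a_{\ell-j}$ for all $j\in\{0,1,\dots,\ell\}$. *)

theory Defs
  imports Main "HOL-Computational_Algebra.Primes"
begin

definition digit :: "nat \<Rightarrow> nat \<Rightarrow> nat \<Rightarrow> nat" where
  "digit b x j = (x div b ^ j) mod b"

definition antipalindromic :: "nat \<Rightarrow> nat \<Rightarrow> bool" where
  "antipalindromic b x \<longleftrightarrow>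
     (\<exists>l. b ^ l \<le> x \<and> x < b ^ (Suc l) \<and>
          (\<forall>j\<le>l. digit b x j = b - 1 - digit b x (l - j)))"

definition composite :: "nat \<Rightarrow> bool" where
  "composite a \<longleftrightarrow> a > 1 \<and> \<not> prime a"

end

theory Submission
  imports Defs
begin

text \<open>Write a composite number as a = p q with 2 \<le> p \<le> q. In base q + 1 it has the two
  digits p - 1 and q + 1 - p, which add up to the largest digit q, so it is antipalindromic;
  and in base 2a + 1 it is the single digit a, which is its own complement.
  The two bases differ because q + 1 \<le> a < 2a + 1.\<close>

lemma antipalindromic_single_digit:
  assumes "0 < d"
  shows "antipalindromic (2 * d + 1) d"
  unfolding antipalindromic_def
proof (intro exI conjI allI impI)
  show "(2 * d + 1) ^ 0 \<le> d" and "d < (2 * d + 1) ^ Suc 0"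
    using assms by simp_all
  fix j :: nat assume "j \<le> 0"
  then show "digit (2 * d + 1) d j = 2 * d + 1 - 1 - digit (2 * d + 1) d (0 - j)"
    by (simp add: digit_def)
qed

lemma antipalindromic_two_digits:
  assumes "0 < d" "d + e + 1 = b"
  shows "antipalindromic b (d * b + e)"
  unfolding antipalindromic_def
proof (intro exI conjI allI impI)
  have "e < b" using assms by simp
  then have low: "digit b (d * b + e) 0 = e" and high: "digit b (d * b + e) 1 = d"
    using assms by (simp_all add: digit_def)
  have "1 * b \<le> d * b" using assms by (intro mult_le_mono1) simp
  then show "b ^ 1 \<le> d * b + e" by (simp only: power_one_right mult_1 trans_le_add1)
  have "d * b + e < Suc d * b" using \<open>e < b\<close> by simp
  also have "\<dots> \<le> b * b" using assms by (intro mult_le_mono1) simp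
  finally show "d * b + e < b ^ Suc 1" by (simp add: power2_eq_square)
  fix j :: nat assume "j \<le> 1"
  then consider "j = 0" | "j = 1" by linarith
  then show "digit b (d * b + e) j = b - 1 - digit b (d * b + e) (1 - j)"
    by cases (use low high assms in simp_all)
qed

lemma antipalindromic_mult_pred_base:
  assumes "2 \<le> k" "k \<le> b"
  shows "antipalindromic b (k * (b - 1))"
proof -
  have "k * (b - 1) = (k - 1) * b + (b - k)"
    using assms by (simp add: algebra_simps diff_mult_distrib diff_mult_distrib2)
  then show ?thesis
    using antipalindromic_two_digits[of "k - 1" "b - k" b] assms by simp
qed

lemma composite_factorization:
  assumes "composite a"
  obtains p q where "a = p * q" "2 \<le> p" "p \<le> q"
proof -
  from assms have "1 < a" "\<not> prime a" unfolding composite_def by auto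
  then obtain m where m: "m dvd a" "m \<noteq> 1" "m \<noteq> a"
    using prime_nat_iff by auto
  then obtain n where a: "a = m * n" by (auto elim: dvdE)
  have "m \<noteq> 0" "n \<noteq> 0" using a \<open>1 < a\<close> by (metis mult_0 mult_0_right not_less_zero)+
  moreover have "n \<noteq> 1" using a m by auto
  ultimately have "2 \<le> m" "2 \<le> n" using m by auto
  then show thesis
    using that[of m n] that[of n m] a by (cases "m \<le> n") (auto simp: mult.commute)
qed

theorem mainTheorem13:
  fixes a :: nat
  assumes "composite a"
  shows "\<exists>b c. b \<ge> 2 \<and> c \<ge> 2 \<and> b \<noteq> c \<and> antipalindromic b a \<and> antipalindromic c a"
proof -
  obtain p q where a: "a = p * q" and "2 \<le> p" "p \<le> q"
    using assms by (rule composite_factorization)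
  have "antipalindromic (q + 1) a"
    using antipalindromic_mult_pred_base[of p "q + 1"] a \<open>2 \<le> p\<close> \<open>p \<le> q\<close>
    by (simp add: mult.commute)
  moreover have "antipalindromic (2 * a + 1) a"
    using antipalindromic_single_digit a \<open>2 \<le> p\<close> \<open>p \<le> q\<close> by simp
  moreover have "q + 1 < 2 * a + 1"
    using a \<open>2 \<le> p\<close> \<open>p \<le> q\<close> by (simp add: mult_le_mono1 order.strict_trans2)
  ultimately show ?thesis
    using \<open>2 \<le> p\<close> \<open>p \<le> q\<close> by (intro exI[of _ "q + 1"] exI[of _ "2 * a + 1"]) auto
qed

end
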